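(* Suppose a unitary $C$ is written in the form $$C=H_{\mathbf a}P_{\mathbf d}Z_{\mathbf D}\,\mathbf H\,e^{\mathrm{i}\phi}X_{\mathbf u}Z_{\mathbf v}P_{\mathbf b}Z_{\mathbf B}X_{\mathbf A}$$ with $\mathbf a,\mathbf d,\mathbf u,\mathbf v,\mathbf b\in\mathbb F_2^n$, $\mathbf D,\mathbf B\in\mathcal B_n$, $\mathbf A\in GL_n(\mathbb F_2)$ and $\phi\in\{k\pi/4:k\in\mathbb Z\}$. Then for every $i\in\{0,\dots,n-1\}$, the product $P_iC$ can also be written in this form (with possibly different data of the same types).
   Context: Qubits are labelled $0,\dots,n-1$; computational basis $\{|x\rangle:x\in\mathbb F_2^n\}$; $\mathrm{i}=\sqrt{-1}$. One-qubit gates $\mathtt H=\frac1{\sqrt2}\begin{pmatrix}1&1\\1&-1\end{pmatrix}$, $\mathtt P=\mathrm{diag}(1,\mathrm{i})$, $\mathtt Z=\mathrm{diag}(1,-1)$, $\mathtt X=\begin{pmatrix}0&1\\1&0\end{pmatrix}$; $U_i$ denotes the gate $\mathtt U$ acting on qubit $i$, and $U_{\mathbf a}=\prod_iU_i^{a_i}$ for $\mathbf a\in\mathbb F_2^n$. $\mathbf H=\prod_{i=0}^{n-1}H_i$. For $\mathbf A\in GL_n(\mathbb F_2)$, $X_{\mathbf A}|x\rangle=|\mathbf Ax\rangle$. $\mathcal B_n$ is the set of symmetric $n\times n$ matrices over $\mathbb F_2$ with zero diagonal, and for $\mathbf B\in\mathcal B_n$, $Z_{\mathbf B}|x\rangle=(-1)^{\sum_{i<j}b_{ij}x_ix_j}|x\rangle$.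 *)

theory Defs
  imports Complex_Main "HOL-Library.Z2"
begin

text \<open>Vectors in F_2^n are functions nat => bit (entries at index >= n are zero);
  an operator on the n-qubit space is given by its matrix entries
  M x y = <x|M|y>, indexed by computational basis vectors x, y in F_2^n.\<close>

type_synonym bvec = "nat \<Rightarrow> bit"
type_synonym qop = "bvec \<Rightarrow> bvec \<Rightarrow> complex"

definition bvecs :: "nat \<Rightarrow> bvec set" where
  "bvecs n = {x. \<forall>i\<ge>n. x i = 0}"

definition mmult :: "nat \<Rightarrow> qop \<Rightarrow> qop \<Rightarrow> qop" where
  "mmult n M N = (\<lambda>x y. \<Sum>z\<in>bvecs n. M x z * N z y)"

definition mid :: qop where
  "mid = (\<lambda>x y. if x = y then 1 else 0)"

definition smult_op :: "complex \<Rightarrow> qop \<Rightarrow> qop" where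
  "smult_op c M = (\<lambda>x y. c * M x y)"

definition op_eq :: "nat \<Rightarrow> qop \<Rightarrow> qop \<Rightarrow> bool" where
  "op_eq n M N \<longleftrightarrow> (\<forall>x\<in>bvecs n. \<forall>y\<in>bvecs n. M x y = N x y)"

definition Hg :: "bit \<Rightarrow> bit \<Rightarrow> complex" where
  "Hg a b = (if a = 1 \<and> b = 1 then -1 else 1) / complex_of_real (sqrt 2)"
definition Pg :: "bit \<Rightarrow> bit \<Rightarrow> complex" where
  "Pg a b = (if a \<noteq> b then 0 else if a = 1 then \<i> else 1)"
definition Zg :: "bit \<Rightarrow> bit \<Rightarrow> complex" where
  "Zg a b = (if a \<noteq> b then 0 else if a = 1 then -1 else 1)"
definition Xg :: "bit \<Rightarrow> bit \<Rightarrow> complex" where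
  "Xg a b = (if a \<noteq> b then 1 else 0)"

definition gate1 :: "nat \<Rightarrow> (bit \<Rightarrow> bit \<Rightarrow> complex) \<Rightarrow> qop" where
  "gate1 i U = (\<lambda>x y. if (\<forall>j. j \<noteq> i \<longrightarrow> x j = y j) then U (x i) (y i) else 0)"

definition gates :: "nat \<Rightarrow> (bit \<Rightarrow> bit \<Rightarrow> complex) \<Rightarrow> bvec \<Rightarrow> qop" where
  "gates n U a = foldr (\<lambda>i M. mmult n (if a i = 1 then gate1 i U else mid) M) [0..<n] mid"

definition allH :: "nat \<Rightarrow> qop" where
  "allH n = foldr (\<lambda>i M. mmult n (gate1 i Hg) M) [0..<n] mid"

type_synonym bmat = "nat \<Rightarrow> nat \<Rightarrow> bit"

definition matvec :: "nat \<Rightarrow> bmat \<Rightarrow> bvec \<Rightarrow> bvec" where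
  "matvec n A x = (\<lambda>i. if i < n then (\<Sum>j<n. A i j * x j) else 0)"

definition GL2 :: "nat \<Rightarrow> bmat \<Rightarrow> bool" where
  "GL2 n A \<longleftrightarrow> (\<exists>A'.
     (\<forall>i<n. \<forall>k<n. (\<Sum>j<n. A i j * A' j k) = (if i = k then 1 else 0)) \<and>
     (\<forall>i<n. \<forall>k<n. (\<Sum>j<n. A' i j * A j k) = (if i = k then 1 else 0)))"

definition symB :: "nat \<Rightarrow> bmat \<Rightarrow> bool" where
  "symB n B \<longleftrightarrow> (\<forall>i<n. \<forall>j<n. B i j = B j i) \<and> (\<forall>i<n. B i i = 0)"

definition XA :: "nat \<Rightarrow> bmat \<Rightarrow> qop" where
  "XA n A = (\<lambda>x y. if x = matvec n A y then 1 else 0)"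

definition ZB :: "nat \<Rightarrow> bmat \<Rightarrow> qop" where
  "ZB n B = (\<lambda>x y. if x = y then
      (if (\<Sum>j<n. \<Sum>i<j. B i j * x i * x j) = 1 then -1 else 1) else 0)"

definition normal_form_op ::
  "nat \<Rightarrow> bvec \<Rightarrow> bvec \<Rightarrow> bmat \<Rightarrow> int \<Rightarrow> bvec \<Rightarrow> bvec \<Rightarrow> bvec \<Rightarrow> bmat \<Rightarrow> bmat \<Rightarrow> qop" where
  "normal_form_op n a d D k u v b B A =
     mmult n (gates n Hg a) (mmult n (gates n Pg d) (mmult n (ZB n D) (mmult n (allH n)
       (mmult n (smult_op (cis (of_int k * pi / 4)) (gates n Xg u))
         (mmult n (gates n Zg v) (mmult n (gates n Pg b) (mmult n (ZB n B) (XA n A))))))))"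

definition in_normal_form :: "nat \<Rightarrow> qop \<Rightarrow> bool" where
  "in_normal_form n C \<longleftrightarrow> (\<exists>a d D k u v b B A.
     a \<in> bvecs n \<and> d \<in> bvecs n \<and> u \<in> bvecs n \<and> v \<in> bvecs n \<and> b \<in> bvecs n \<and>
     symB n D \<and> symB n B \<and> GL2 n A \<and>
     op_eq n C (normal_form_op n a d D k u v b B A))"

end

(*
  Entrywise the normal form reads
    <x|C|y> = e^(i k pi/4) rho(A y) <x| H_a P_d Z_D H |A y + u>,
  where rho is the phase function of the diagonal part Z_v P_b Z_B.  Multiplying by P_i on the
  left multiplies this entry by i^(x_i).  If a_i = 0, qubit i passes through H_a unchanged and
  P_i merges into P_d; when d_i = 1 already, P_i^2 = Z_i becomes X_i after crossing H and is
  absorbed into u.  If a_i = 1, summing out qubit i of the middle Hadamard layer and using a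
  one-qubit Clifford identity eliminates P_i (together with the H and P on qubit i when d_i = 1),
  at the cost of a phase depending on t = A y + u only through t_i, and a phase
  i^l (-1)^((d_i + t_i) l) with l = sum_m D_im z_m linear in the remaining summation variables.
  The latter is absorbed by adding the row N of D to d, N N^T to D, and shifting t along N.  On
  the input side that shift is the transvection w |-> w + w_i N, which replaces A by
  (I + N e_i^T) A; composing rho with it and multiplying by the t_i-dependent phase again gives
  a phase function of the same kind, up to a power of e^(i pi/4) that goes into k.
*)

theory Submission
  imports Defs "HOL-Library.Function_Algebras"
begin

(* HOL-Library.Z2 rewrites + and * on bits to XOR and AND by default, which defeats ring reasoning. *)
declare add_bit_eq_xor [simp del] mult_bit_eq_and [simp del]

section \<open>Phases indexed by bits\<close>

definition sgn_bit :: "bit \<Rightarrow> complex" where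
  "sgn_bit c = (if c = 1 then -1 else 1)"

definition i_pow_bit :: "bit \<Rightarrow> complex" where
  "i_pow_bit c = (if c = 1 then \<i> else 1)"

lemma sgn_bit_simps [simp]: "sgn_bit 0 = 1" "sgn_bit 1 = -1"
  by (simp_all add: sgn_bit_def)

lemma i_pow_bit_simps [simp]: "i_pow_bit 0 = 1" "i_pow_bit 1 = \<i>"
  by (simp_all add: i_pow_bit_def)

lemma bit_mult_self [simp]: "(c::bit) * c = c"
  by (cases c) simp_all

lemma sgn_bit_add: "sgn_bit (a + b) = sgn_bit a * sgn_bit b"
  by (cases a; cases b) simp_all

lemma sgn_bit_square: "sgn_bit a * sgn_bit a = 1"
  by (cases a) simp_all

lemma i_pow_bit_add: "i_pow_bit (a + b) = i_pow_bit a * i_pow_bit b * sgn_bit (a * b)"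
  by (cases a; cases b) simp_all

lemma i_pow_bit_mult_add_left:
  "i_pow_bit ((a + a') * c) = i_pow_bit (a * c) * i_pow_bit (a' * c) * sgn_bit (a * a' * c)"
  by (cases a; cases a'; cases c) simp_all

lemma i_pow_bit_mult_add_right:
  "i_pow_bit (a * (c + c')) = i_pow_bit (a * c) * i_pow_bit (a * c') * sgn_bit (a * c * c')"
  by (cases a; cases c; cases c') simp_all

lemma sgn_bit_mult_add_left: "sgn_bit ((a + a') * c) = sgn_bit (a * c) * sgn_bit (a' * c)"
  by (simp add: distrib_right sgn_bit_add)

lemma sgn_bit_sum: "finite A \<Longrightarrow> sgn_bit (\<Sum>j\<in>A. f j) = (\<Prod>j\<in>A. sgn_bit (f j))"
  by (induction A rule: finite_induct) (simp_all add: sgn_bit_add)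

lemma i_pow_bit_sum:
  "i_pow_bit (\<Sum>k<(m::nat). x k) = (\<Prod>k<m. i_pow_bit (x k)) * sgn_bit (\<Sum>k<m. \<Sum>j<k. x j * x k)"
proof (induction m)
  case (Suc m)
  have "sgn_bit ((\<Sum>j<m. x j) * x m) = sgn_bit (\<Sum>j<m. x j * x m)"
    by (simp add: sum_distrib_right)
  with Suc show ?case by (simp add: i_pow_bit_add sgn_bit_add algebra_simps)
qed simp

lemma sum_UNIV_bit: "(\<Sum>c\<in>UNIV. f c) = f 0 + f (1::bit)"
proof -
  have UNIV_bit: "(UNIV::bit set) = {0, 1}" by (auto intro: bit.exhaust)
  show ?thesis unfolding UNIV_bit by simp
qed

section \<open>Vectors over \<open>F\<^sub>2\<close>\<close>

lemma bvecs_eq_iff: "x \<in> bvecs n \<Longrightarrow> y \<in> bvecs n \<Longrightarrow> x = y \<longleftrightarrow> (\<forall>j<n. x j = y j)"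
  unfolding bvecs_def by (auto simp: fun_eq_iff) (metis not_le)

lemma finite_bvecs [simp]: "finite (bvecs n)"
proof -
  have "inj_on (\<lambda>x. map x [0..<n]) (bvecs n)"
    by (rule inj_onI) (simp add: bvecs_eq_iff map_eq_conv)
  moreover have "(\<lambda>x. map x [0..<n]) ` bvecs n \<subseteq> {xs. set xs \<subseteq> {0, 1} \<and> length xs = n}"
    by (auto intro: bit.exhaust)
  moreover have "finite {xs. set xs \<subseteq> {0, 1::bit} \<and> length xs = n}"
    by (rule finite_lists_length_eq) simp
  ultimately show ?thesis
    using finite_imageD finite_subset by blast
qed

lemma bvecs_update [simp]: "j < n \<Longrightarrow> x \<in> bvecs n \<Longrightarrow> x(j := c) \<in> bvecs n"
  unfolding bvecs_def by auto

lemma bvecs_add [simp]: "x \<in> bvecs n \<Longrightarrow> y \<in> bvecs n \<Longrightarrow> x + y \<in> bvecs n"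
  unfolding bvecs_def by auto

lemma bvecs_mult [simp]: "x \<in> bvecs n \<Longrightarrow> y \<in> bvecs n \<Longrightarrow> x * y \<in> bvecs n"
  unfolding bvecs_def by auto

lemma bvecs_unit [simp]: "i < n \<Longrightarrow> 0(i := c) \<in> bvecs n"
  unfolding bvecs_def by auto

lemma matvec_in_bvecs [simp]: "matvec n A y \<in> bvecs n"
  unfolding bvecs_def matvec_def by auto

lemma add_eq_iff_bvec: "(x::bvec) = y + u \<longleftrightarrow> y = x + u"
  by (auto simp: fun_eq_iff)

lemma sum_bvecs_split_at:
  assumes "i < n"
  shows "(\<Sum>z\<in>bvecs n. f z) = (\<Sum>z | z \<in> bvecs n \<and> z i = 0. \<Sum>c\<in>UNIV. f (z(i := c)))"
proof -
  let ?Z0 = "{z \<in> bvecs n. z i = 0}" and ?Z1 = "{z \<in> bvecs n. z i = 1}"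
  have split: "bvecs n = ?Z0 \<union> ?Z1"
    by (auto intro: bit.exhaust)
  have "(\<Sum>z\<in>bvecs n. f z) = (\<Sum>z\<in>?Z0. f z) + (\<Sum>z\<in>?Z1. f z)"
    by (subst split, rule sum.union_disjoint) auto
  moreover have "(\<Sum>z\<in>?Z0. f (z(i := 0))) = (\<Sum>z\<in>?Z0. f z)"
    by (intro sum.cong) (auto simp: fun_upd_idem)
  moreover have "(\<Sum>z\<in>?Z0. f (z(i := 1))) = (\<Sum>z\<in>?Z1. f z)"
    by (rule sum.reindex_bij_witness[of _ "\<lambda>z. z(i := 0)" "\<lambda>z. z(i := 1)"]) (use assms in auto)
  ultimately show ?thesis
    by (simp add: sum_UNIV_bit sum.distrib)
qed

lemma prod_lessThan_update:
  "j < (n::nat) \<Longrightarrow> (\<Prod>m<n. F m ((x(j := c)) m)) = F j c * (\<Prod>m\<in>{..<n}-{j}. F m (x m))"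
  by (subst prod.remove[of _ j]) (auto intro!: prod.cong)

lemma prod_lessThan_scale_factor:
  assumes "i < (n::nat)" "\<And>j. j \<noteq> i \<Longrightarrow> G j = F j" "G i = e * F i"
  shows "(\<Prod>j<n. G j) = e * (\<Prod>j<n. F j)"
proof -
  have "(\<Prod>j\<in>{..<n}-{i}. G j) = (\<Prod>j\<in>{..<n}-{i}. F j)"
    using assms(2) by (intro prod.cong) auto
  then show ?thesis
    using assms(1,3) by (simp add: prod.remove[of "{..<n}" i] mult.assoc)
qed

section \<open>Entries of gate products\<close>

definition Ig :: "bit \<Rightarrow> bit \<Rightarrow> complex" where
  "Ig a b = (if a = b then 1 else 0)"

definition diag_op :: "(bvec \<Rightarrow> complex) \<Rightarrow> qop" where
  "diag_op f x y = (if x = y then f x else 0)"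

definition phaseP :: "nat \<Rightarrow> bvec \<Rightarrow> bvec \<Rightarrow> complex" where
  "phaseP n d z = (\<Prod>j<n. i_pow_bit (d j * z j))"

definition phaseZ :: "nat \<Rightarrow> bvec \<Rightarrow> bvec \<Rightarrow> complex" where
  "phaseZ n v z = (\<Prod>j<n. sgn_bit (v j * z j))"

definition qform :: "nat \<Rightarrow> bmat \<Rightarrow> bvec \<Rightarrow> bit" where
  "qform n B w = (\<Sum>j<n. \<Sum>i<j. B i j * w i * w j)"

lemma prod_Ig: "x \<in> bvecs n \<Longrightarrow> y \<in> bvecs n \<Longrightarrow> (\<Prod>m<n. Ig (x m) (y m)) = mid x y"
  by (auto simp: Ig_def mid_def bvecs_eq_iff intro: prod_zero)

lemma sum_bvecs_neighbours:
  assumes "x \<in> bvecs n" "j < n"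
  shows "(\<Sum>z\<in>bvecs n. if \<forall>m. m \<noteq> j \<longrightarrow> x m = z m then g z else 0) = (\<Sum>c\<in>UNIV. g (x(j := c)))"
proof -
  have "{z \<in> bvecs n. \<forall>m. m \<noteq> j \<longrightarrow> x m = z m} = {x(j := 0), x(j := 1)}"
  proof (intro equalityI subsetI)
    fix z assume "z \<in> {z \<in> bvecs n. \<forall>m. m \<noteq> j \<longrightarrow> x m = z m}"
    then have "z = x(j := z j)" by auto
    then show "z \<in> {x(j := 0), x(j := 1)}" by (cases "z j") auto
  qed (use assms in auto)
  moreover have "x(j := 0) \<noteq> x(j := 1)"
    by (metis fun_upd_same zero_neq_one)
  ultimately show ?thesis
    by (simp add: sum.inter_filter[symmetric] sum_UNIV_bit)
qed

lemma mmult_mid_left: "x \<in> bvecs n \<Longrightarrow> mmult n mid M x y = M x y"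
  unfolding mmult_def mid_def by (simp add: if_distrib[of "\<lambda>c. c * _"] cong: if_cong)

lemma foldr_gate1_entry:
  assumes "distinct l" "set l \<subseteq> {..<n}" "x \<in> bvecs n" "y \<in> bvecs n"
  shows "foldr (\<lambda>j M. mmult n (if sel j then gate1 j U else mid) M) l mid x y
       = (\<Prod>m<n. (if m \<in> set l \<and> sel m then U else Ig) (x m) (y m))"
  using assms
proof (induction l arbitrary: x)
  case Nil
  then show ?case by (simp add: prod_Ig)
next
  case (Cons j l)
  let ?M = "foldr (\<lambda>j M. mmult n (if sel j then gate1 j U else mid) M) l mid"
  let ?G = "\<lambda>l m. (if m \<in> set l \<and> sel m then U else Ig)"
  have j: "j < n" "j \<notin> set l" using Cons.prems by auto
  show ?case
  proof (cases "sel j")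
    case False
    then show ?thesis
      using Cons by (simp add: mmult_mid_left) (rule prod.cong; auto)
  next
    case True
    have "?M (x(j := c)) y = Ig c (y j) * (\<Prod>m\<in>{..<n}-{j}. ?G l m (x m) (y m))" for c
      using Cons j prod_lessThan_update[OF j(1), of "\<lambda>m c. ?G l m c (y m)"] by simp
    note IH = this
    have "foldr (\<lambda>j M. mmult n (if sel j then gate1 j U else mid) M) (j # l) mid x y
       = (\<Sum>z\<in>bvecs n. if \<forall>m. m \<noteq> j \<longrightarrow> x m = z m then U (x j) (z j) * ?M z y else 0)"
      using True by (simp add: mmult_def[of n "gate1 j U"]) (intro sum.cong; auto simp: gate1_def)
    also have "\<dots> = (\<Sum>c\<in>UNIV. U (x j) c * ?M (x(j := c)) y)"
      using sum_bvecs_neighbours[OF Cons.prems(3) j(1), of "\<lambda>z. U (x j) (z j) * ?M z y"] by simp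
    also have "\<dots> = (\<Sum>c\<in>UNIV. U (x j) c * Ig c (y j)) * (\<Prod>m\<in>{..<n}-{j}. ?G l m (x m) (y m))"
      unfolding IH by (simp add: sum_distrib_right mult.assoc)
    also have "\<dots> = (\<Prod>m<n. ?G (j # l) m (x m) (y m))"
    proof -
      have "(\<Prod>m\<in>{..<n}-{j}. ?G l m (x m) (y m)) = (\<Prod>m\<in>{..<n}-{j}. ?G (j # l) m (x m) (y m))"
        by (rule prod.cong) auto
      then show ?thesis
        using True j by (cases "y j") (simp_all add: sum_UNIV_bit Ig_def prod.remove[of _ j])
    qed
    finally show ?thesis .
  qed
qed

lemma gates_entry:
  "x \<in> bvecs n \<Longrightarrow> y \<in> bvecs n \<Longrightarrow>
   gates n U a x y = (\<Prod>m<n. (if a m = 1 then U else Ig) (x m) (y m))"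
  unfolding gates_def by (subst foldr_gate1_entry) auto

lemma allH_entry: "x \<in> bvecs n \<Longrightarrow> y \<in> bvecs n \<Longrightarrow> allH n x y = (\<Prod>m<n. Hg (x m) (y m))"
  unfolding allH_def using foldr_gate1_entry[of "[0..<n]" n x y "\<lambda>_. True" Hg]
  by (simp add: atLeast0LessThan)

lemma mmult_diag_op_left:
  "op_eq n M (diag_op f) \<Longrightarrow> x \<in> bvecs n \<Longrightarrow> mmult n M N x y = f x * N x y"
proof -
  assume "op_eq n M (diag_op f)" "x \<in> bvecs n"
  then have "mmult n M N x y = (\<Sum>z\<in>bvecs n. if x = z then f x * N z y else 0)"
    unfolding op_eq_def mmult_def diag_op_def by (intro sum.cong) auto
  with \<open>x \<in> bvecs n\<close> show ?thesis by simp
qed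

lemma gates_diagonal:
  assumes "\<And>c c'. c \<noteq> c' \<Longrightarrow> U c c' = 0"
  shows "op_eq n (gates n U a) (diag_op (\<lambda>z. \<Prod>m<n. if a m = 1 then U (z m) (z m) else 1))"
  unfolding op_eq_def diag_op_def
proof (intro ballI)
  fix x y assume xy: "x \<in> bvecs n" "y \<in> bvecs n"
  show "gates n U a x y = (if x = y then \<Prod>m<n. if a m = 1 then U (x m) (x m) else 1 else 0)"
  proof (cases "x = y")
    case False
    then obtain j where "j < n" "x j \<noteq> y j" using xy bvecs_eq_iff by blast
    then show ?thesis
      using False assms by (simp add: gates_entry[OF xy] Ig_def) (intro prod_zero bexI[of _ j]; simp)
  qed (use xy in \<open>auto simp: gates_entry Ig_def intro!: prod.cong\<close>)
qed

lemma gates_Pg_diag: "op_eq n (gates n Pg d) (diag_op (phaseP n d))"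
proof -
  have "(\<Prod>m<n. if d m = 1 then Pg (z m) (z m) else 1) = phaseP n d z" for z
    unfolding phaseP_def by (intro prod.cong) (auto simp: Pg_def i_pow_bit_def)
  then show ?thesis
    using gates_diagonal[of Pg n d] by (simp add: Pg_def)
qed

lemma gates_Zg_diag: "op_eq n (gates n Zg v) (diag_op (phaseZ n v))"
proof -
  have "(\<Prod>m<n. if v m = 1 then Zg (z m) (z m) else 1) = phaseZ n v z" for z
    unfolding phaseZ_def by (intro prod.cong) (auto simp: Zg_def sgn_bit_def)
  then show ?thesis
    using gates_diagonal[of Zg n v] by (simp add: Zg_def)
qed

lemma mmult_ZB_left: "z \<in> bvecs n \<Longrightarrow> mmult n (ZB n B) N z y = sgn_bit (qform n B z) * N z y"
  by (rule mmult_diag_op_left) (auto simp: op_eq_def ZB_def diag_op_def qform_def sgn_bit_def)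

lemma gate1_Pg_eq_diag_op: "gate1 i Pg = diag_op (\<lambda>x. i_pow_bit (x i))"
proof (intro ext)
  fix x z :: bvec
  have "x = z" if "\<forall>j. j \<noteq> i \<longrightarrow> x j = z j" "x i = z i"
    using that by (auto simp: fun_eq_iff)
  then show "gate1 i Pg x z = diag_op (\<lambda>x. i_pow_bit (x i)) x z"
    unfolding gate1_def diag_op_def Pg_def i_pow_bit_def by auto
qed

lemma mmult_gate1_Pg_left: "x \<in> bvecs n \<Longrightarrow> mmult n (gate1 i Pg) M x y = i_pow_bit (x i) * M x y"
  by (rule mmult_diag_op_left) (simp add: gate1_Pg_eq_diag_op op_eq_def)

lemma gates_Xg_entry:
  assumes "x \<in> bvecs n" "y \<in> bvecs n" "u \<in> bvecs n"
  shows "gates n Xg u x y = (if x = y + u then 1 else 0)"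
proof -
  have Xg_eq: "Xg c c' = Ig c (c' + 1)" for c c'
    by (cases c; cases c') (simp_all add: Xg_def Ig_def)
  then have "gates n Xg u x y = (\<Prod>m<n. Ig (x m) ((y + u) m))"
    unfolding gates_entry[OF assms(1,2)]
  proof (intro prod.cong refl)
    fix m show "(if u m = 1 then Xg else Ig) (x m) (y m) = Ig (x m) ((y + u) m)"
      using Xg_eq by (cases "u m") simp_all
  qed
  then show ?thesis
    using assms prod_Ig[of x n "y + u"] by (simp add: mid_def)
qed

section \<open>Entries of the normal form\<close>

(* hpzh n a d D x t is the entry <x| H_a P_d Z_D H |t>, and diag_phase n b v B is the phase
   function of Z_v P_b Z_B; see normal_form_op_entry. *)
definition qubit_factor :: "bvec \<Rightarrow> bvec \<Rightarrow> bvec \<Rightarrow> bvec \<Rightarrow> nat \<Rightarrow> bit \<Rightarrow> complex" where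
  "qubit_factor a d x t m c = (if a m = 1 then Hg else Ig) (x m) c * i_pow_bit (d m * c) * Hg c (t m)"

definition hpzh :: "nat \<Rightarrow> bvec \<Rightarrow> bvec \<Rightarrow> bmat \<Rightarrow> bvec \<Rightarrow> bvec \<Rightarrow> complex" where
  "hpzh n a d D x t = (\<Sum>z\<in>bvecs n. (\<Prod>m<n. qubit_factor a d x t m (z m)) * sgn_bit (qform n D z))"

definition diag_phase :: "nat \<Rightarrow> bvec \<Rightarrow> bvec \<Rightarrow> bmat \<Rightarrow> bvec \<Rightarrow> complex" where
  "diag_phase n b v B w = phaseP n b w * phaseZ n v w * sgn_bit (qform n B w)"

lemma X_Z_P_ZB_XA_entry:
  assumes z: "z \<in> bvecs n" and u: "u \<in> bvecs n"
  shows "mmult n (smult_op \<omega> (gates n Xg u))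
      (mmult n (gates n Zg v) (mmult n (gates n Pg b) (mmult n (ZB n B) (XA n A)))) z y
    = (if z = matvec n A y + u then \<omega> * diag_phase n b v B (matvec n A y) else 0)"
proof -
  define w where "w = matvec n A y"
  define R where "R = mmult n (gates n Zg v) (mmult n (gates n Pg b) (mmult n (ZB n B) (XA n A)))"
  have R: "R z' y = (if z' = w then diag_phase n b v B w else 0)"
    if z': "z' \<in> bvecs n" for z'
    unfolding R_def
    by (simp add: mmult_diag_op_left[OF gates_Zg_diag z'] mmult_diag_op_left[OF gates_Pg_diag z']
        mmult_ZB_left[OF z'] XA_def diag_phase_def w_def)
  have "mmult n (smult_op \<omega> (gates n Xg u)) R z y = (\<Sum>z'\<in>bvecs n. if z' = z + u then \<omega> * R z' y else 0)"
    unfolding mmult_def smult_op_def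
    by (intro sum.cong refl) (simp add: gates_Xg_entry[OF z _ u] add_eq_iff_bvec)
  also have "\<dots> = (if z = w + u then \<omega> * diag_phase n b v B w else 0)"
    using z u R[of "z + u"] by (auto simp: add_eq_iff_bvec[symmetric])
  finally show ?thesis
    unfolding R_def w_def .
qed

lemma normal_form_op_entry:
  assumes x: "x \<in> bvecs n" and y: "y \<in> bvecs n" and u: "u \<in> bvecs n"
  shows "normal_form_op n a d D k u v b B A x y
    = cis (of_int k * pi / 4) * diag_phase n b v B (matvec n A y) * hpzh n a d D x (matvec n A y + u)"
proof -
  define w where "w = matvec n A y"
  define \<omega> where "\<omega> = cis (of_int k * pi / 4)"
  define XR where "XR = mmult n (smult_op \<omega> (gates n Xg u))
    (mmult n (gates n Zg v) (mmult n (gates n Pg b) (mmult n (ZB n B) (XA n A))))"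
  have HXR: "mmult n (allH n) XR z y = \<omega> * diag_phase n b v B w * (\<Prod>m<n. Hg (z m) ((w + u) m))"
    if z: "z \<in> bvecs n" for z
  proof -
    have "mmult n (allH n) XR z y
        = (\<Sum>z'\<in>bvecs n. if z' = w + u then allH n z z' * (\<omega> * diag_phase n b v B w) else 0)"
      unfolding mmult_def[of n "allH n" XR]
      by (intro sum.cong refl) (simp add: XR_def X_Z_P_ZB_XA_entry u w_def)
    then show ?thesis
      using u z unfolding w_def by (simp add: allH_entry mult_ac)
  qed
  have "normal_form_op n a d D k u v b B A x y
      = mmult n (gates n Hg a) (mmult n (gates n Pg d) (mmult n (ZB n D) (mmult n (allH n) XR))) x y"
    unfolding normal_form_op_def XR_def \<omega>_def ..
  also have "\<dots> = (\<Sum>z\<in>bvecs n. gates n Hg a x z * (phaseP n d z * (sgn_bit (qform n D z)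
      * (\<omega> * diag_phase n b v B w * (\<Prod>m<n. Hg (z m) ((w + u) m))))))"
    unfolding mmult_def[of n "gates n Hg a"]
    by (intro sum.cong refl) (simp add: mmult_diag_op_left[OF gates_Pg_diag] mmult_ZB_left HXR)
  also have "\<dots> = \<omega> * diag_phase n b v B w * hpzh n a d D x (w + u)"
    unfolding hpzh_def sum_distrib_left
    by (intro sum.cong refl) (simp add: gates_entry[OF x] qubit_factor_def phaseP_def prod.distrib mult_ac)
  finally show ?thesis
    unfolding w_def \<omega>_def .
qed

section \<open>Quadratic forms over \<open>F\<^sub>2\<close>\<close>

definition bform :: "nat \<Rightarrow> bmat \<Rightarrow> bvec \<Rightarrow> bvec \<Rightarrow> bit" where
  "bform n B x y = (\<Sum>j<n. \<Sum>k<n. x k * B k j * y j)"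

lemma sum_pairs_symmetric:
  fixes g :: "nat \<Rightarrow> nat \<Rightarrow> 'a::comm_monoid_add"
  shows "(\<Sum>j<n. \<Sum>k<j. g k j + g j k) + (\<Sum>j<n. g j j) = (\<Sum>j<n. \<Sum>k<n. g k j)"
proof (induction n)
  case (Suc n)
  have "(\<Sum>j<Suc n. \<Sum>k<j. g k j + g j k) + (\<Sum>j<Suc n. g j j)
     = ((\<Sum>j<n. \<Sum>k<j. g k j + g j k) + (\<Sum>j<n. g j j)) + ((\<Sum>k<n. g k n) + (\<Sum>k<n. g n k) + g n n)"
    by (simp add: sum.distrib add_ac)
  also have "\<dots> = (\<Sum>j<Suc n. \<Sum>k<Suc n. g k j)"
    using Suc by (simp add: sum.distrib add_ac)
  finally show ?case .
qed simp

lemma sum_pairs_through: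
  fixes f :: "nat \<Rightarrow> 'a::comm_monoid_add"
  assumes "i < n"
  shows "(\<Sum>j<n. \<Sum>k<j. (if k = i then f j else 0) + (if j = i then f k else 0))
       = (\<Sum>m<n. if m = i then 0 else f m)"
proof -
  have "(\<Sum>j<n. \<Sum>k<j. if j = i then f k else 0) = (\<Sum>j<n. if j = i then \<Sum>k<j. f k else 0)"
    by (intro sum.cong refl) simp
  also have "\<dots> = (\<Sum>k<i. f k)"
    using assms by simp
  also have "\<dots> = (\<Sum>m<n. if m < i then f m else 0)"
    using assms by (simp add: sum.inter_filter[symmetric]) (rule sum.cong; auto)
  finally have "(\<Sum>j<n. \<Sum>k<j. (if k = i then f j else 0) + (if j = i then f k else 0))
      = (\<Sum>m<n. if i < m then f m else 0) + (\<Sum>m<n. if m < i then f m else 0)"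
    by (simp add: sum.distrib)
  also have "\<dots> = (\<Sum>m<n. if m = i then 0 else f m)"
    by (simp add: sum.distrib[symmetric]) (rule sum.cong; auto)
  finally show ?thesis .
qed

lemma symB_add: "symB n B \<Longrightarrow> symB n B' \<Longrightarrow> symB n (\<lambda>j k. B j k + B' j k)"
  unfolding symB_def by auto

lemma symB_zero: "symB n 0"
  unfolding symB_def by simp

lemma qform_add_matrix: "qform n (\<lambda>j k. B j k + B' j k) w = qform n B w + qform n B' w"
  unfolding qform_def by (simp add: algebra_simps sum.distrib)

lemma qform_add:
  assumes "symB n B"
  shows "qform n B (x + y) = qform n B x + qform n B y + bform n B x y"
proof -
  let ?g = "\<lambda>k j. x k * B k j * y j"
  have expand: "B k j * (x k + y k) * (x j + y j) = B k j * x k * x j + B k j * y k * y j + (?g k j + ?g j k)"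
    if "k < j" "j < n" for k j
  proof -
    have "B j k = B k j"
      using assms that unfolding symB_def by simp
    then show ?thesis by (simp add: algebra_simps)
  qed
  have "qform n B (x + y) = (\<Sum>j<n. \<Sum>k<j. B k j * x k * x j + B k j * y k * y j + (?g k j + ?g j k))"
    unfolding qform_def by (intro sum.cong refl) (simp add: expand)
  then have "qform n B (x + y) = qform n B x + qform n B y + (\<Sum>j<n. \<Sum>k<j. ?g k j + ?g j k)"
    unfolding qform_def by (simp only: sum.distrib)
  moreover have "(\<Sum>j<n. ?g j j) = 0"
    using assms unfolding symB_def by simp
  ultimately show ?thesis
    using sum_pairs_symmetric[of ?g n] unfolding bform_def by simp
qed

lemma qform_unit: "qform n B (0(i := c)) = 0"
  unfolding qform_def by (intro sum.neutral ballI) auto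

lemma bform_unit_right:
  assumes "symB n B" "i < n"
  shows "bform n B z (0(i := c)) = c * (\<Sum>m<n. B i m * z m)"
proof -
  have "bform n B z (0(i := c)) = (\<Sum>j<n. if j = i then \<Sum>k<n. z k * B k i * c else 0)"
    unfolding bform_def by (intro sum.cong refl) auto
  also have "\<dots> = (\<Sum>k<n. z k * B k i * c)"
    using assms(2) by simp
  also have "\<dots> = c * (\<Sum>m<n. B i m * z m)"
    using assms unfolding symB_def by (auto simp: sum_distrib_left mult_ac intro!: sum.cong)
  finally show ?thesis .
qed

lemma qform_update:
  assumes "symB n B" "i < n" "z i = 0"
  shows "qform n B (z(i := c)) = qform n B z + c * (\<Sum>m<n. B i m * z m)"
proof -
  have "z(i := c) = z + 0(i := c)"
    using assms(3) by (auto simp: fun_eq_iff)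
  then show ?thesis
    using assms by (simp add: qform_add qform_unit bform_unit_right)
qed

lemma symB_add_outer: "symB n D \<Longrightarrow> symB n (\<lambda>j k. D j k + (if j = k then 0 else N j * N k))"
  unfolding symB_def by (simp add: mult.commute)

lemma qform_add_outer:
  "qform n (\<lambda>j k. D j k + (if j = k then 0 else N j * N k)) z
    = qform n D z + (\<Sum>m<n. \<Sum>j<m. (N j * z j) * (N m * z m))"
proof -
  have "qform n (\<lambda>j k. if j = k then 0 else N j * N k) z = (\<Sum>m<n. \<Sum>j<m. (N j * z j) * (N m * z m))"
    unfolding qform_def by (intro sum.cong refl) (auto simp: mult_ac)
  then show ?thesis
    by (simp add: qform_add_matrix)
qed

definition cz_mat :: "nat \<Rightarrow> bvec \<Rightarrow> bmat" where
  "cz_mat i c = (\<lambda>j k. if j = i \<and> k \<noteq> i then c k else if k = i \<and> j \<noteq> i then c j else 0)"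

lemma symB_cz_mat: "symB n (cz_mat i c)"
  unfolding symB_def cz_mat_def by auto

lemma qform_cz_mat:
  assumes "i < n"
  shows "qform n (cz_mat i c) w = w i * (\<Sum>m<n. c m * w m) + c i * w i"
proof -
  have "qform n (cz_mat i c) w
      = (\<Sum>j<n. \<Sum>k<j. (if k = i then c j * w j * w i else 0) + (if j = i then c k * w k * w i else 0))"
    unfolding qform_def cz_mat_def by (intro sum.cong refl) (auto simp: algebra_simps)
  also have "\<dots> = (\<Sum>m<n. if m = i then 0 else c m * w m * w i)"
    using sum_pairs_through[OF assms] .
  also have "\<dots> = (\<Sum>m<n. c m * w m * w i) + c i * w i"
    using assms by (simp add: sum.remove[of _ i] sum.If_cases Diff_eq add_ac mult.assoc)
  finally show ?thesis
    by (simp add: sum_distrib_left mult_ac)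
qed

section \<open>Diagonal phases\<close>

definition is_diag_phase :: "nat \<Rightarrow> (bvec \<Rightarrow> complex) \<Rightarrow> bool" where
  "is_diag_phase n f \<longleftrightarrow> (\<exists>b v B. b \<in> bvecs n \<and> v \<in> bvecs n \<and> symB n B \<and>
     (\<forall>w\<in>bvecs n. f w = diag_phase n b v B w))"

lemma is_diag_phaseI:
  "b \<in> bvecs n \<Longrightarrow> v \<in> bvecs n \<Longrightarrow> symB n B \<Longrightarrow> (\<And>w. w \<in> bvecs n \<Longrightarrow> f w = diag_phase n b v B w)
   \<Longrightarrow> is_diag_phase n f"
  unfolding is_diag_phase_def by blast

lemma phaseP_add_left: "phaseP n (b + b') w = phaseP n b w * phaseP n b' w * phaseZ n (b * b') w"
  unfolding phaseP_def phaseZ_def by (simp add: i_pow_bit_mult_add_left prod.distrib)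

lemma phaseZ_add_left: "phaseZ n (v + v') w = phaseZ n v w * phaseZ n v' w"
  unfolding phaseZ_def by (simp add: sgn_bit_mult_add_left prod.distrib)

lemma phaseP_add_right:
  "phaseP n b (x + y) = phaseP n b x * phaseP n b y * sgn_bit (\<Sum>j<n. b j * x j * y j)"
  unfolding phaseP_def by (simp add: i_pow_bit_mult_add_right prod.distrib sgn_bit_sum)

lemma phaseZ_add_right: "phaseZ n v (x + y) = phaseZ n v x * phaseZ n v y"
  unfolding phaseZ_def by (simp add: distrib_left sgn_bit_add prod.distrib)

lemma phaseZ_square: "phaseZ n v w * phaseZ n v w = 1"
  unfolding phaseZ_def by (simp add: prod.distrib[symmetric] sgn_bit_square)

lemma diag_phase_mult:
  "diag_phase n b v B w * diag_phase n b' v' B' w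
    = diag_phase n (b + b') (v + v' + b * b') (\<lambda>j k. B j k + B' j k) w"
  unfolding diag_phase_def
  by (simp add: phaseP_add_left phaseZ_add_left qform_add_matrix sgn_bit_add mult_ac)
    (simp add: phaseZ_square flip: mult.assoc)

lemma is_diag_phase_mult:
  assumes "is_diag_phase n f" "is_diag_phase n g"
  shows "is_diag_phase n (\<lambda>w. f w * g w)"
proof -
  obtain b v B b' v' B' where "b \<in> bvecs n" "v \<in> bvecs n" "symB n B" "b' \<in> bvecs n" "v' \<in> bvecs n"
    "symB n B'" "\<forall>w\<in>bvecs n. f w = diag_phase n b v B w" "\<forall>w\<in>bvecs n. g w = diag_phase n b' v' B' w"
    using assms unfolding is_diag_phase_def by blast
  then show ?thesis
    by (intro is_diag_phaseI[of "b + b'" n "v + v' + b * b'"]) (simp_all add: symB_add diag_phase_mult)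
qed

lemma diag_phase_add:
  assumes "symB n B"
  shows "diag_phase n b v B (x + y) = diag_phase n b v B x * diag_phase n b v B y
    * sgn_bit (\<Sum>j<n. (b j * x j + (\<Sum>k<n. x k * B k j)) * y j)"
proof -
  have "(\<Sum>j<n. (b j * x j + (\<Sum>k<n. x k * B k j)) * y j) = (\<Sum>j<n. b j * x j * y j) + bform n B x y"
    unfolding bform_def by (simp add: algebra_simps sum.distrib sum_distrib_left)
  then show ?thesis
    using assms unfolding diag_phase_def
    by (simp add: phaseP_add_right phaseZ_add_right qform_add sgn_bit_add mult_ac)
qed

lemma diag_phase_eq_i_pow_sgn: "\<exists>\<beta>\<^sub>1 \<beta>\<^sub>2. diag_phase n b v B y = i_pow_bit \<beta>\<^sub>1 * sgn_bit \<beta>\<^sub>2"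
proof -
  have "phaseP n b y = i_pow_bit (\<Sum>k<n. b k * y k) * sgn_bit (\<Sum>k<n. \<Sum>j<k. (b j * y j) * (b k * y k))"
    unfolding phaseP_def i_pow_bit_sum by (simp add: mult.assoc sgn_bit_square)
  then show ?thesis
    unfolding diag_phase_def phaseZ_def by (auto simp: sgn_bit_sum[symmetric] sgn_bit_add[symmetric] mult.assoc)
qed

lemma phaseP_unit: "i < n \<Longrightarrow> phaseP n (0(i := c)) w = i_pow_bit (c * w i)"
  unfolding phaseP_def by (subst prod.remove[of _ i]) auto

lemma phaseZ_unit: "i < n \<Longrightarrow> phaseZ n (0(i := c)) w = sgn_bit (c * w i)"
  unfolding phaseZ_def by (subst prod.remove[of _ i]) auto

lemma is_diag_phase_i_pow: "i < n \<Longrightarrow> is_diag_phase n (\<lambda>w. i_pow_bit (c * w i))"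
  by (rule is_diag_phaseI[of "0(i := c)" n 0 0])
    (auto simp: symB_zero diag_phase_def phaseP_unit phaseZ_def qform_def bvecs_def)

lemma is_diag_phase_sgn: "i < n \<Longrightarrow> is_diag_phase n (\<lambda>w. sgn_bit (c * w i))"
  by (rule is_diag_phaseI[of 0 n "0(i := c)" 0])
    (auto simp: symB_zero diag_phase_def phaseZ_unit phaseP_def qform_def bvecs_def)

lemma is_diag_phase_cz: "i < n \<Longrightarrow> is_diag_phase n (\<lambda>w. sgn_bit (w i * (\<Sum>m<n. c m * w m)))"
  by (rule is_diag_phaseI[of 0 n "0(i := c i)" "cz_mat i c"])
    (auto simp: symB_cz_mat diag_phase_def phaseZ_unit phaseP_def qform_cz_mat sgn_bit_add
      sgn_bit_square mult_ac bvecs_def)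

definition transvect :: "bvec \<Rightarrow> nat \<Rightarrow> bvec \<Rightarrow> bvec" where
  "transvect N i w = (\<lambda>j. w j + w i * N j)"

lemma transvect_in_bvecs: "N \<in> bvecs n \<Longrightarrow> w \<in> bvecs n \<Longrightarrow> transvect N i w \<in> bvecs n"
  unfolding transvect_def bvecs_def by auto

lemma transvect_at: "N i = 0 \<Longrightarrow> transvect N i w i = w i"
  unfolding transvect_def by simp

lemma transvect_involution: "N i = 0 \<Longrightarrow> transvect N i (transvect N i w) = w"
  unfolding transvect_def by (auto simp: fun_eq_iff algebra_simps)

lemma is_diag_phase_transvect:
  assumes "i < n" "b \<in> bvecs n" "v \<in> bvecs n" "symB n B"
  shows "is_diag_phase n (\<lambda>w. diag_phase n b v B (transvect N i w))"
proof -
  obtain \<beta>\<^sub>1 \<beta>\<^sub>2 where \<beta>: "diag_phase n b v B N = i_pow_bit \<beta>\<^sub>1 * sgn_bit \<beta>\<^sub>2"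
    using diag_phase_eq_i_pow_sgn by blast
  define c where "c j = b j * N j + (\<Sum>k<n. N k * B k j)" for j
  have "diag_phase n b v B (transvect N i w)
      = i_pow_bit (\<beta>\<^sub>1 * w i) * sgn_bit (\<beta>\<^sub>2 * w i) * diag_phase n b v B w * sgn_bit (w i * (\<Sum>j<n. c j * w j))"
    for w
  proof -
    have "transvect N i w = (\<lambda>j. w i * N j) + w"
      unfolding transvect_def by (auto simp: add.commute)
    moreover have "diag_phase n b v B (\<lambda>_. 0) = 1"
      by (simp add: diag_phase_def phaseP_def phaseZ_def qform_def)
    ultimately show ?thesis
      using assms(4) \<beta> by (cases "w i") (simp_all add: diag_phase_add c_def algebra_simps)
  qed
  moreover have "is_diag_phase n (diag_phase n b v B)"
    using assms(2-4) by (rule is_diag_phaseI) simp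
  ultimately show ?thesis
    using assms(1)
    by (simp add: is_diag_phase_mult is_diag_phase_i_pow is_diag_phase_sgn is_diag_phase_cz)
qed

lemma diag_phase_transvect_absorb:
  assumes "i < n" "b \<in> bvecs n" "v \<in> bvecs n" "symB n B" "N \<in> bvecs n" "N i = 0"
  obtains b' v' B' where "b' \<in> bvecs n" "v' \<in> bvecs n" "symB n B'"
    "\<And>w. w \<in> bvecs n \<Longrightarrow>
       diag_phase n b' v' B' (transvect N i w) = diag_phase n b v B w * i_pow_bit (w i) * sgn_bit (q * w i)"
proof -
  have "is_diag_phase n (\<lambda>w. diag_phase n b v B (transvect N i w) * i_pow_bit (1 * w i) * sgn_bit (q * w i))"
    using assms(1-4)
    by (intro is_diag_phase_mult is_diag_phase_transvect is_diag_phase_i_pow is_diag_phase_sgn)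
  then obtain b' v' B' where "b' \<in> bvecs n" "v' \<in> bvecs n" "symB n B'" and
    eq: "\<And>w. w \<in> bvecs n \<Longrightarrow> diag_phase n b' v' B' w
      = diag_phase n b v B (transvect N i w) * i_pow_bit (w i) * sgn_bit (q * w i)"
    unfolding is_diag_phase_def by auto
  moreover have "diag_phase n b' v' B' (transvect N i w) = diag_phase n b v B w * i_pow_bit (w i) * sgn_bit (q * w i)"
    if "w \<in> bvecs n" for w
    using eq[OF transvect_in_bvecs[OF assms(5) that]] assms(6)
    by (simp add: transvect_involution transvect_at)
  ultimately show ?thesis
    using that by blast
qed

section \<open>Invertible matrices over \<open>F\<^sub>2\<close>\<close>

definition bmat_mult :: "nat \<Rightarrow> bmat \<Rightarrow> bmat \<Rightarrow> bmat" where
  "bmat_mult n X Y = (\<lambda>i k. \<Sum>j<n. X i j * Y j k)"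

definition bmat_id :: bmat where
  "bmat_id = (\<lambda>i k. if i = k then 1 else 0)"

definition transvect_mat :: "bvec \<Rightarrow> nat \<Rightarrow> bmat" where
  "transvect_mat N i = (\<lambda>j l. bmat_id j l + (if l = i then N j else 0))"

abbreviation bmat_inverse :: "nat \<Rightarrow> bmat \<Rightarrow> bmat \<Rightarrow> bool" where
  "bmat_inverse n X X' \<equiv> \<forall>i<n. \<forall>k<n. bmat_mult n X X' i k = bmat_id i k"

lemma GL2_iff: "GL2 n A \<longleftrightarrow> (\<exists>A'. bmat_inverse n A A' \<and> bmat_inverse n A' A)"
  unfolding GL2_def bmat_mult_def bmat_id_def ..

lemma bmat_mult_assoc: "bmat_mult n (bmat_mult n X Y) Z i k = bmat_mult n X (bmat_mult n Y Z) i k"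
  unfolding bmat_mult_def sum_distrib_left sum_distrib_right by (subst sum.swap) (simp add: mult.assoc)

lemma bmat_mult_cong_left:
  "(\<And>i j. i < n \<Longrightarrow> j < n \<Longrightarrow> X i j = X' i j) \<Longrightarrow> i < n \<Longrightarrow> bmat_mult n X Y i k = bmat_mult n X' Y i k"
  unfolding bmat_mult_def by (intro sum.cong) auto

lemma bmat_mult_cong_right:
  "(\<And>j k. j < n \<Longrightarrow> k < n \<Longrightarrow> Y j k = Y' j k) \<Longrightarrow> k < n \<Longrightarrow> bmat_mult n X Y i k = bmat_mult n X Y' i k"
  unfolding bmat_mult_def by (intro sum.cong) auto

lemma bmat_mult_id_left: "i < n \<Longrightarrow> bmat_mult n bmat_id X i k = X i k"
proof -
  assume "i < n"
  moreover have "bmat_mult n bmat_id X i k = (\<Sum>j<n. if i = j then X j k else 0)"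
    unfolding bmat_mult_def bmat_id_def by (intro sum.cong) auto
  ultimately show ?thesis by simp
qed

lemma bmat_inverse_mult:
  assumes "bmat_inverse n X X'" "bmat_inverse n Y Y'"
  shows "bmat_inverse n (bmat_mult n X Y) (bmat_mult n Y' X')"
proof (intro allI impI)
  fix i k assume ik: "i < n" "k < n"
  have "bmat_mult n (bmat_mult n X Y) (bmat_mult n Y' X') i k
      = bmat_mult n X (bmat_mult n Y (bmat_mult n Y' X')) i k"
    by (rule bmat_mult_assoc)
  also have "\<dots> = bmat_mult n X (bmat_mult n (bmat_mult n Y Y') X') i k"
    using ik by (intro bmat_mult_cong_right) (simp_all add: bmat_mult_assoc)
  also have "\<dots> = bmat_mult n X (bmat_mult n bmat_id X') i k"
    using assms(2) ik by (intro bmat_mult_cong_right bmat_mult_cong_left) auto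
  also have "\<dots> = bmat_mult n X X' i k"
    using ik by (intro bmat_mult_cong_right) (simp_all add: bmat_mult_id_left)
  finally show "bmat_mult n (bmat_mult n X Y) (bmat_mult n Y' X') i k = bmat_id i k"
    using assms(1) ik by simp
qed

lemma GL2_mult: "GL2 n X \<Longrightarrow> GL2 n Y \<Longrightarrow> GL2 n (bmat_mult n X Y)"
proof -
  assume "GL2 n X" "GL2 n Y"
  then obtain X' Y' where "bmat_inverse n X X'" "bmat_inverse n X' X" "bmat_inverse n Y Y'" "bmat_inverse n Y' Y"
    unfolding GL2_iff by blast
  then show ?thesis
    unfolding GL2_iff by (intro exI[of _ "bmat_mult n Y' X'"] conjI bmat_inverse_mult)
qed

lemma transvect_mat_square:
  assumes "i < n" "N i = 0"
  shows "bmat_inverse n (transvect_mat N i) (transvect_mat N i)"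
proof (intro allI impI)
  fix j k assume jk: "j < n" "k < n"
  let ?col = "\<lambda>l. bmat_id l k + (if k = i then N l else 0)"
  have "bmat_mult n (transvect_mat N i) (transvect_mat N i) j k
      = (\<Sum>l<n. (if l = j then ?col l else 0) + (if l = i then N j * ?col l else 0))"
    unfolding bmat_mult_def transvect_mat_def by (intro sum.cong refl) (auto simp: bmat_id_def algebra_simps)
  also have "\<dots> = ?col j + N j * ?col i"
    using assms jk by (simp add: sum.distrib)
  also have "\<dots> = bmat_id j k"
    using assms by (auto simp: bmat_id_def)
  finally show "bmat_mult n (transvect_mat N i) (transvect_mat N i) j k = bmat_id j k" .
qed

lemma GL2_transvect_mat: "i < n \<Longrightarrow> N i = 0 \<Longrightarrow> GL2 n (transvect_mat N i)"
  unfolding GL2_iff using transvect_mat_square by blast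

lemma matvec_bmat_mult: "matvec n (bmat_mult n X A) y = matvec n X (matvec n A y)"
proof
  fix j
  have "(\<Sum>l<n. (\<Sum>m<n. X j m * A m l) * y l) = (\<Sum>m<n. X j m * (\<Sum>l<n. A m l * y l))"
    unfolding sum_distrib_left sum_distrib_right by (subst sum.swap) (simp add: mult.assoc)
  also have "\<dots> = (\<Sum>m<n. X j m * (if m < n then \<Sum>l<n. A m l * y l else 0))"
    by (intro sum.cong) auto
  finally show "matvec n (bmat_mult n X A) y j = matvec n X (matvec n A y) j"
    unfolding matvec_def bmat_mult_def by simp
qed

lemma matvec_transvect_mat:
  assumes "i < n" "N \<in> bvecs n" "w \<in> bvecs n"
  shows "matvec n (transvect_mat N i) w = transvect N i w"
proof
  fix j
  show "matvec n (transvect_mat N i) w j = transvect N i w j"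
  proof (cases "j < n")
    case True
    have "(\<Sum>l<n. transvect_mat N i j l * w l)
        = (\<Sum>l<n. (if l = j then w l else 0) + (if l = i then N j * w l else 0))"
      unfolding transvect_mat_def by (intro sum.cong refl) (auto simp: bmat_id_def algebra_simps)
    with True assms(1) show ?thesis
      unfolding matvec_def transvect_def by (simp add: sum.distrib mult.commute)
  next
    case False
    with assms show ?thesis
      unfolding matvec_def transvect_def bvecs_def by simp
  qed
qed

section \<open>Multiplying the normal form by \<open>P\<^sub>i\<close>\<close>

lemma hpzh_scale_qubit:
  assumes "i < n" "\<And>m. m \<noteq> i \<Longrightarrow> qubit_factor a' d' x t' m = qubit_factor a d x t m"
    and "\<And>c. qubit_factor a' d' x t' i c = \<kappa> * qubit_factor a d x t i c"
  shows "hpzh n a' d' D x t' = \<kappa> * hpzh n a d D x t"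
  unfolding hpzh_def sum_distrib_left
proof (intro sum.cong refl)
  fix z
  have "(\<Prod>m<n. qubit_factor a' d' x t' m (z m)) = \<kappa> * (\<Prod>m<n. qubit_factor a d x t m (z m))"
    using assms by (intro prod_lessThan_scale_factor) auto
  then show "(\<Prod>m<n. qubit_factor a' d' x t' m (z m)) * sgn_bit (qform n D z)
      = \<kappa> * ((\<Prod>m<n. qubit_factor a d x t m (z m)) * sgn_bit (qform n D z))"
    by simp
qed

lemma hpzh_P_merge:
  assumes "i < n" "a i = 0" "d i = 0"
  shows "hpzh n a (d(i := 1)) D x t = i_pow_bit (x i) * hpzh n a d D x t"
proof (rule hpzh_scale_qubit[OF assms(1)])
  show "qubit_factor a (d(i := 1)) x t i c = i_pow_bit (x i) * qubit_factor a d x t i c" for c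
    using assms by (cases "x i"; cases c) (simp_all add: qubit_factor_def Ig_def)
qed (auto simp: qubit_factor_def fun_eq_iff)

lemma hpzh_P_square_to_X:
  assumes "i < n" "a i = 0" "d i = 1"
  shows "hpzh n a (d(i := 0)) D x (t(i := t i + 1)) = i_pow_bit (x i) * hpzh n a d D x t"
proof (rule hpzh_scale_qubit[OF assms(1)])
  show "qubit_factor a (d(i := 0)) x (t(i := t i + 1)) i c = i_pow_bit (x i) * qubit_factor a d x t i c"
    for c
    using assms by (cases "x i"; cases c; cases "t i") (simp_all add: qubit_factor_def Ig_def Hg_def)
qed (auto simp: qubit_factor_def fun_eq_iff)

lemma hpzh_split_at:
  assumes "i < n" "symB n D"
  shows "hpzh n a d D x t = (\<Sum>z | z \<in> bvecs n \<and> z i = 0.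
     (\<Sum>c\<in>UNIV. qubit_factor a d x t i c * sgn_bit (c * (\<Sum>m<n. D i m * z m)))
     * ((\<Prod>m\<in>{..<n}-{i}. qubit_factor a d x t m (z m)) * sgn_bit (qform n D z)))"
  unfolding hpzh_def sum_bvecs_split_at[OF assms(1)]
proof (intro sum.cong refl)
  fix z assume "z \<in> {z. z \<in> bvecs n \<and> z i = 0}"
  then have "z i = 0" by simp
  moreover have "(\<Prod>m<n. qubit_factor a d x t m ((z(i := c)) m))
      = qubit_factor a d x t i c * (\<Prod>m\<in>{..<n}-{i}. qubit_factor a d x t m (z m))" for c
    by (rule prod_lessThan_update[OF assms(1)])
  ultimately show "(\<Sum>c\<in>UNIV. (\<Prod>m<n. qubit_factor a d x t m ((z(i := c)) m)) * sgn_bit (qform n D (z(i := c))))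
    = (\<Sum>c\<in>UNIV. qubit_factor a d x t i c * sgn_bit (c * (\<Sum>m<n. D i m * z m)))
      * ((\<Prod>m\<in>{..<n}-{i}. qubit_factor a d x t m (z m)) * sgn_bit (qform n D z))"
    using assms by (simp only: qform_update sgn_bit_add sum_distrib_right) (simp add: mult_ac)
qed

definition omega_phase :: "bit \<Rightarrow> bit \<Rightarrow> complex" where
  "omega_phase p t = (if p = 1 then cis (pi / 4) else 1) * i_pow_bit t * sgn_bit (p * t)"

lemma Hg_eq_sgn_bit: "Hg a b = sgn_bit (a * b) * (complex_of_real (sqrt 2) / 2)"
proof -
  have "1 / complex_of_real (sqrt 2) = complex_of_real (sqrt 2) / 2"
    by (simp add: field_simps flip: of_real_mult)
  then show ?thesis
    by (cases a; cases b) (simp_all add: Hg_def)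
qed

(* The left side is <x| P H P^p Z^l H |t>; the sum on the right is <x| U Z^l H |t>, with U = I
   for p = 1 and U = H for p = 0. *)
lemma one_qubit_identity:
  "i_pow_bit x * (\<Sum>c\<in>UNIV. Hg x c * i_pow_bit (p * c) * sgn_bit (c * l) * Hg c t)
   = omega_phase p t * i_pow_bit l * sgn_bit ((p + t) * l)
     * (\<Sum>c\<in>UNIV. (if p = 1 then Ig else Hg) x c * sgn_bit (c * l) * Hg c t)"
proof -
  define h where "h = complex_of_real (sqrt 2) / 2"
  have hh: "h * h = 1 / 2"
    unfolding h_def by (simp flip: of_real_mult)
  have hh': "h * (h * z) = z / 2" for z
    using hh by (simp flip: mult.assoc)
  have "cis (pi / 4) = (1 + \<i>) * h"
    unfolding h_def by (simp add: complex_eq_iff cos_45 sin_45)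
  then show ?thesis
    unfolding Hg_eq_sgn_bit h_def[symmetric] omega_phase_def sum_UNIV_bit
    by (cases x; cases p; cases l; cases t) (simp_all add: Ig_def algebra_simps hh hh')
qed

lemma qubit_factor_remove_H:
  assumes "a i = 1" "a' i = (if d i = 1 then 0 else 1)" "d' i = 0" "t' i = t i"
  shows "i_pow_bit (x i) * (\<Sum>c\<in>UNIV. qubit_factor a d x t i c * sgn_bit (c * l))
    = omega_phase (d i) (t i) * (i_pow_bit l * sgn_bit ((d i + t i) * l))
      * (\<Sum>c\<in>UNIV. qubit_factor a' d' x t' i c * sgn_bit (c * l))"
proof -
  have "qubit_factor a d x t i c = Hg (x i) c * i_pow_bit (d i * c) * Hg c (t i)"
    and "qubit_factor a' d' x t' i c = (if d i = 1 then Ig else Hg) (x i) c * Hg c (t i)" for c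
    using assms by (simp_all add: qubit_factor_def)
  then show ?thesis
    using one_qubit_identity[of "x i" "d i" l "t i"] by (simp only: mult_ac)
qed

lemma qubit_factor_absorb:
  assumes "a' m = a m" "d' m = d m + e" "t' m = t m + e * T + (d m + p) * e"
  shows "qubit_factor a d x t m c * (i_pow_bit (e * c) * sgn_bit ((p + T) * (e * c)))
    = qubit_factor a' d' x t' m c"
  using assms unfolding qubit_factor_def
  by (cases "d m"; cases c; cases "t m"; cases e; cases p; cases T) (simp_all add: Hg_def Ig_def)

lemma prod_qubit_factor_absorb:
  assumes "i < n" "N i = 0"
    and "\<And>m. m \<noteq> i \<Longrightarrow> a' m = a m" "\<And>m. m \<noteq> i \<Longrightarrow> d' m = d m + N m"
    and "\<And>m. m \<noteq> i \<Longrightarrow> t' m = t m + N m * T + (d m + p) * N m"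
  shows "(\<Prod>m\<in>{..<n}-{i}. qubit_factor a d x t m (z m))
      * (i_pow_bit (\<Sum>m<n. N m * z m) * sgn_bit ((p + T) * (\<Sum>m<n. N m * z m)))
    = (\<Prod>m\<in>{..<n}-{i}. qubit_factor a' d' x t' m (z m)) * sgn_bit (\<Sum>m<n. \<Sum>j<m. (N j * z j) * (N m * z m))"
proof -
  have "i_pow_bit (\<Sum>m<n. N m * z m) * sgn_bit ((p + T) * (\<Sum>m<n. N m * z m))
      = (\<Prod>m<n. i_pow_bit (N m * z m) * sgn_bit ((p + T) * (N m * z m)))
        * sgn_bit (\<Sum>m<n. \<Sum>j<m. (N j * z j) * (N m * z m))"
    by (simp add: i_pow_bit_sum sum_distrib_left sgn_bit_sum prod.distrib mult_ac)
  also have "(\<Prod>m<n. i_pow_bit (N m * z m) * sgn_bit ((p + T) * (N m * z m)))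
      = (\<Prod>m\<in>{..<n}-{i}. i_pow_bit (N m * z m) * sgn_bit ((p + T) * (N m * z m)))"
    using assms(1,2) by (simp add: prod.remove[of _ i])
  moreover have "(\<Prod>m\<in>{..<n}-{i}. qubit_factor a d x t m (z m)
        * (i_pow_bit (N m * z m) * sgn_bit ((p + T) * (N m * z m))))
      = (\<Prod>m\<in>{..<n}-{i}. qubit_factor a' d' x t' m (z m))"
    using assms(3-5) by (intro prod.cong refl qubit_factor_absorb) auto
  ultimately show ?thesis
    by (simp add: prod.distrib mult.assoc)
qed

(* N is row i of D.  The phase left over from one_qubit_identity is spread over the other qubits
   by qubit_factor_absorb, and its quadratic part goes into D'. *)
lemma hpzh_mult_P_at_H:
  assumes i: "i < n" and D: "symB n D" and ai: "a i = 1"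
    and N: "N = (\<lambda>j. if j < n then D i j else 0)"
    and a': "a' = (if d i = 1 then a(i := 0) else a)"
    and d': "d' = (\<lambda>j. if j = i then 0 else d j + N j)"
    and D': "D' = (\<lambda>j k. D j k + (if j = k then 0 else N j * N k))"
    and t': "t' = (\<lambda>j. t j + N j * t i + (d j + d i) * N j)"
  shows "i_pow_bit (x i) * hpzh n a d D x t = omega_phase (d i) (t i) * hpzh n a' d' D' x t'"
proof -
  let ?l = "\<lambda>z. \<Sum>m<n. N m * z m"
  let ?rest = "\<lambda>a d t z. (\<Prod>m\<in>{..<n}-{i}. qubit_factor a d x t m (z m))"
  have Ni: "N i = 0"
    using D i unfolding N symB_def by simp
  have row: "(\<Sum>m<n. D i m * z m) = ?l z" "(\<Sum>m<n. D' i m * z m) = ?l z" for z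
    using Ni unfolding N D' by (auto intro: sum.cong)
  have symD': "symB n D'"
    unfolding D' using D by (rule symB_add_outer)
  have qubit_i: "i_pow_bit (x i) * (\<Sum>c\<in>UNIV. qubit_factor a d x t i c * sgn_bit (c * ?l z))
      = omega_phase (d i) (t i) * (i_pow_bit (?l z) * sgn_bit ((d i + t i) * ?l z))
        * (\<Sum>c\<in>UNIV. qubit_factor a' d' x t' i c * sgn_bit (c * ?l z))" for z
    using Ni by (intro qubit_factor_remove_H) (simp_all add: ai a' d' t')
  have others: "?rest a d t z * (i_pow_bit (?l z) * sgn_bit ((d i + t i) * ?l z)) * sgn_bit (qform n D z)
      = ?rest a' d' t' z * sgn_bit (qform n D' z)" for z
    using prod_qubit_factor_absorb[where a = a and a' = a' and d = d and d' = d' and t = t and t' = t'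
        and T = "t i" and p = "d i" and x = x and z = z and N = N and i = i, OF i Ni]
    unfolding D' qform_add_outer sgn_bit_add by (simp add: a' d' t' mult_ac)
  have "i_pow_bit (x i) * ((\<Sum>c\<in>UNIV. qubit_factor a d x t i c * sgn_bit (c * ?l z))
        * (?rest a d t z * sgn_bit (qform n D z)))
      = omega_phase (d i) (t i) * ((\<Sum>c\<in>UNIV. qubit_factor a' d' x t' i c * sgn_bit (c * ?l z))
        * (?rest a' d' t' z * sgn_bit (qform n D' z)))" for z
    unfolding others[symmetric] by (simp only: mult.assoc[symmetric] qubit_i) (simp only: mult_ac)
  then show ?thesis
    unfolding hpzh_split_at[OF i D] hpzh_split_at[OF i symD'] row sum_distrib_left by simp
qed

lemma omega_phase_add: "omega_phase p (w + u) = omega_phase p u * i_pow_bit w * sgn_bit ((u + p) * w)"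
  unfolding omega_phase_def by (cases p; cases u; cases w) (simp_all add: mult.assoc)

lemma cis_add_omega_phase:
  "cis (of_int (k + ((if p = 1 then 1 else 0) + (if u = 1 then 2 else 0) + (if p = 1 \<and> u = 1 then 4 else 0)))
     * pi / 4) = cis (of_int k * pi / 4) * omega_phase p u"
proof -
  have "cis (7 * pi / 4) = cis (pi / 4) * \<i> * -1"
    using cis_mult[of "pi / 4" "pi / 2"] cis_mult[of "pi / 4 + pi / 2" pi]
    by (simp add: field_simps)
  then show ?thesis
    unfolding omega_phase_def
    by (cases p; cases u) (simp_all add: add_divide_distrib distrib_right flip: cis_mult)
qed

definition normal_form_data :: "nat \<Rightarrow> bvec \<Rightarrow> bvec \<Rightarrow> bmat \<Rightarrow> bvec \<Rightarrow> bvec \<Rightarrow> bvec \<Rightarrow> bmat \<Rightarrow> bmat \<Rightarrow> bool"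
  where "normal_form_data n a d D u v b B A \<longleftrightarrow> a \<in> bvecs n \<and> d \<in> bvecs n \<and> u \<in> bvecs n \<and> v \<in> bvecs n
     \<and> b \<in> bvecs n \<and> symB n D \<and> symB n B \<and> GL2 n A"

lemma in_normal_form_iff: "in_normal_form n C \<longleftrightarrow> (\<exists>a d D k u v b B A.
    normal_form_data n a d D u v b B A \<and> op_eq n C (normal_form_op n a d D k u v b B A))"
  unfolding in_normal_form_def normal_form_data_def by blast

lemma normal_form_op_mult_P_at_H:
  assumes i: "i < n" and data: "normal_form_data n a d D u v b B A" and ai: "a i = 1"
  shows "\<exists>a' d' D' k' u' v' b' B' A'. normal_form_data n a' d' D' u' v' b' B' A' \<and>
    (\<forall>x\<in>bvecs n. \<forall>y\<in>bvecs n. normal_form_op n a' d' D' k' u' v' b' B' A' x y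
       = i_pow_bit (x i) * normal_form_op n a d D k u v b B A x y)"
proof -
  have u: "u \<in> bvecs n" and D: "symB n D"
    using data unfolding normal_form_data_def by simp_all
  define N where "N = (\<lambda>j. if j < n then D i j else 0)"
  define a' where "a' = (if d i = 1 then a(i := 0) else a)"
  define d' where "d' = (\<lambda>j. if j = i then 0 else d j + N j)"
  define D' where "D' = (\<lambda>j k. D j k + (if j = k then 0 else N j * N k))"
  define u' where "u' = (\<lambda>j. u j + N j * u i + (d j + d i) * N j)"
  define A' where "A' = bmat_mult n (transvect_mat N i) A"
  define k' where "k' = k + ((if d i = 1 then 1 else 0) + (if u i = 1 then 2 else 0)
     + (if d i = 1 \<and> u i = 1 then 4 else 0))"
  have N: "N \<in> bvecs n" "N i = 0"
    using D i unfolding N_def symB_def bvecs_def by auto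
  obtain b' v' B' where b'v'B': "b' \<in> bvecs n" "v' \<in> bvecs n" "symB n B'"
    and absorb: "\<And>w. w \<in> bvecs n \<Longrightarrow> diag_phase n b' v' B' (transvect N i w)
      = diag_phase n b v B w * i_pow_bit (w i) * sgn_bit ((u i + d i) * w i)"
    using diag_phase_transvect_absorb[OF i _ _ _ N] data unfolding normal_form_data_def by metis
  have data': "normal_form_data n a' d' D' u' v' b' B' A'"
    using data b'v'B' N i GL2_mult[OF GL2_transvect_mat[where N = N, OF i N(2)]]
    unfolding normal_form_data_def a'_def d'_def D'_def u'_def A'_def
    by (auto simp: bvecs_def symB_def mult.commute)
  have "normal_form_op n a' d' D' k' u' v' b' B' A' x y = i_pow_bit (x i) * normal_form_op n a d D k u v b B A x y"
    if x: "x \<in> bvecs n" and y: "y \<in> bvecs n" for x y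
  proof -
    define w where "w = matvec n A y"
    have w: "w \<in> bvecs n" unfolding w_def by simp
    have A'y: "matvec n A' y = transvect N i w"
      unfolding A'_def matvec_bmat_mult w_def[symmetric] using i N(1) w by (rule matvec_transvect_mat)
    have t': "transvect N i w + u' = (\<lambda>j. (w + u) j + N j * (w + u) i + (d j + d i) * N j)"
      unfolding transvect_def u'_def by (auto simp: algebra_simps)
    have "normal_form_op n a' d' D' k' u' v' b' B' A' x y = cis (of_int k' * pi / 4)
        * diag_phase n b' v' B' (transvect N i w) * hpzh n a' d' D' x (transvect N i w + u')"
      using data' by (simp only: normal_form_op_entry[OF x y] A'y normal_form_data_def)
    also have "\<dots> = cis (of_int k * pi / 4) * diag_phase n b v B w
        * (omega_phase (d i) ((w + u) i) * hpzh n a' d' D' x (transvect N i w + u'))"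
      unfolding absorb[OF w] k'_def cis_add_omega_phase plus_fun_apply omega_phase_add by (simp only: mult_ac)
    also have "\<dots> = cis (of_int k * pi / 4) * diag_phase n b v B w * (i_pow_bit (x i) * hpzh n a d D x (w + u))"
      unfolding hpzh_mult_P_at_H[OF i D ai N_def a'_def d'_def D'_def t'] ..
    also have "\<dots> = i_pow_bit (x i) * normal_form_op n a d D k u v b B A x y"
      using normal_form_op_entry[OF x y u] unfolding w_def by simp
    finally show ?thesis .
  qed
  with data' show ?thesis
    by blast
qed

lemma normal_form_op_P_merge:
  assumes "i < n" "a i = 0" "d i = 0" "x \<in> bvecs n" "y \<in> bvecs n" "u \<in> bvecs n"
  shows "normal_form_op n a (d(i := 1)) D k u v b B A x y = i_pow_bit (x i) * normal_form_op n a d D k u v b B A x y"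
  using assms by (simp add: normal_form_op_entry hpzh_P_merge mult_ac)

lemma normal_form_op_P_square_to_X:
  assumes i: "i < n" and "a i = 0" "d i = 1" and x: "x \<in> bvecs n" and y: "y \<in> bvecs n" and u: "u \<in> bvecs n"
  shows "normal_form_op n a (d(i := 0)) D k (u(i := u i + 1)) v b B A x y
    = i_pow_bit (x i) * normal_form_op n a d D k u v b B A x y"
proof -
  define t where "t = matvec n A y + u"
  have "matvec n A y + u(i := u i + 1) = t(i := t i + 1)"
    unfolding t_def by (auto simp: fun_eq_iff add.assoc)
  moreover have "u(i := u i + 1) \<in> bvecs n"
    using i u by simp
  ultimately have "normal_form_op n a (d(i := 0)) D k (u(i := u i + 1)) v b B A x y
      = cis (of_int k * pi / 4) * diag_phase n b v B (matvec n A y) * hpzh n a (d(i := 0)) D x (t(i := t i + 1))"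
    using x y by (simp only: normal_form_op_entry)
  also have "\<dots> = i_pow_bit (x i) * normal_form_op n a d D k u v b B A x y"
    unfolding hpzh_P_square_to_X[where a = a and d = d and t = t, OF assms(1-3)]
    using x y u by (simp add: normal_form_op_entry t_def)
  finally show ?thesis .
qed

lemma normal_form_op_mult_P:
  assumes i: "i < n" and data: "normal_form_data n a d D u v b B A"
  shows "\<exists>a' d' D' k' u' v' b' B' A'. normal_form_data n a' d' D' u' v' b' B' A' \<and>
    (\<forall>x\<in>bvecs n. \<forall>y\<in>bvecs n. normal_form_op n a' d' D' k' u' v' b' B' A' x y
       = i_pow_bit (x i) * normal_form_op n a d D k u v b B A x y)"
proof -
  have u: "u \<in> bvecs n"
    using data unfolding normal_form_data_def by simp
  consider "a i = 1" | "a i = 0" "d i = 1" | "a i = 0" "d i = 0"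
    by (metis bit_not_one_iff)
  then show ?thesis
  proof cases
    case 1
    then show ?thesis
      using normal_form_op_mult_P_at_H[OF i data] by blast
  next
    case 2
    moreover have "normal_form_data n a (d(i := 0)) D (u(i := u i + 1)) v b B A"
      using data i unfolding normal_form_data_def by simp
    ultimately show ?thesis
      using normal_form_op_P_square_to_X[OF i _ _ _ _ u] by blast
  next
    case 3
    moreover have "normal_form_data n a (d(i := 1)) D u v b B A"
      using data i unfolding normal_form_data_def by simp
    ultimately show ?thesis
      using normal_form_op_P_merge[OF i _ _ _ _ u] by blast
  qed
qed

theorem lemma4p2:
  fixes n i :: nat and C :: qop
  assumes "in_normal_form n C" and "i < n"
  shows "in_normal_form n (mmult n (gate1 i Pg) C)"
proof -
  obtain a d D k u v b B A where data: "normal_form_data n a d D u v b B A"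
    and C: "op_eq n C (normal_form_op n a d D k u v b B A)"
    using assms(1) unfolding in_normal_form_iff by blast
  obtain a' d' D' k' u' v' b' B' A' where data': "normal_form_data n a' d' D' u' v' b' B' A'"
    and P: "\<forall>x\<in>bvecs n. \<forall>y\<in>bvecs n. normal_form_op n a' d' D' k' u' v' b' B' A' x y
       = i_pow_bit (x i) * normal_form_op n a d D k u v b B A x y"
    using normal_form_op_mult_P[OF assms(2) data, where k = k] by blast
  have "op_eq n (mmult n (gate1 i Pg) C) (normal_form_op n a' d' D' k' u' v' b' B' A')"
    using C P unfolding op_eq_def by (simp add: mmult_gate1_Pg_left)
  then show ?thesis
    unfolding in_normal_form_iff using data' by blast
qed

end
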